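(* Let $\mathcal D=(X,\mathcal A,\mu,\mu^{\otimes2},R,I,\Pi_R,G,E_0,\eta)$ be a pre-structural datum with $\eta\in[0,1)$ and $\mu(X)<\infty$, such that $\{r\}\in\mathcal A$ and $F_r:=\Pi_R^{-1}(\{r\})\in\mathcal A$ for every $r\in R$, and such that either (R-fin) $R$ is finite, or (R-ctbl) $R$ is countable, $\mathcal A$ is a $\sigma$-algebra and $\mu$ is $\sigma$-additive. Let $G|_R:=G\cap(R\times R)$ and let $\mathcal D|_R$ be the restricted datum $(R,\ \mathcal A\cap\mathcal P(R),\ \mu|_R,\ \mu^{\otimes2}|_{R\times R},\ R,\ \varnothing,\ \mathrm{id}_R,\ G|_R,\ \mu(R),\ \eta)$. Then: (i) If $\mathcal D$ satisfies Axiom I and Axiom III(b), then $\mu(X\setminus R)=0$ and, for every $B\in\mathcal A$, with $B_R:=B\cap R$, \[\mu^{\otimes2}((B\times X)\cap G)=\mu^{\otimes2}((B_R\times R)\cap G|_R).\] (ii) If $\mathcal D$ satisfies Axiom I and Axiom III(b), then the coupling law (Axiom III(c)) holds for $\mathcal D$ if and only if it holds for $\mathcal D|_R$, i.e. if and only if $\mu^{\otimes2}((B\times R)\cap G|_R)=\mu(B)+\eta\,\mu^{\otimes2}((B\times R)\cap G|_R)$ for all $B\in\mathcal A$ with $B\subseteq R$. (iii) If $\mathcal D$ satisfies Axioms I, II, III(a), III(b) and $X=R\sqcup I$, then $\mathcal D$ is an admissible structural model if and only if $\mathcal D|_R$ is an admissible structural model.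
   Context: For a nonempty set $X$, an algebra $\mathcal A\subseteq\mathcal P(X)$ contains $\varnothing,X$ and is closed under finite unions and complements. A finitely additive measure $\mu:\mathcal A\to[0,\infty)$ satisfies $\mu(\varnothing)=0$ and additivity on disjoint pairs. $\mathcal A\otimes\mathcal A$ denotes the algebra generated by rectangles $B_1\times B_2$, $B_i\in\mathcal A$. For relations $H,K\subseteq X\times X$, $H\circ K=\{(x,z):\exists y\,(x,y)\in H,(y,z)\in K\}$. A pre-structural datum is a tuple $(X,\mathcal A,\mu,\mu^{\otimes2},R,I,\Pi_R,G,E_0,\eta)$ where: $X$ nonempty; $\mathcal A$ an algebra on $X$; $\mu$ a finitely additive measure on $\mathcal A$; $\mu^{\otimes2}:\mathcal A\otimes\mathcal A\to[0,\infty)$ finitely additive with $\mu^{\otimes2}(B_1\times B_2)=\mu(B_1)\mu(B_2)$; $R,I\in\mathcal A$ disjoint; $\Pi_R:X\to R$ a map; $G\in\mathcal A\otimes\mathcal A$; $E_0\in(0,\infty)$; $\eta\in[0,1]$. Axiom I: $\Pi_R\circ\Pi_R=\Pi_R$, $\Pi_R(r)=r$ for $r\in R$, and $\Pi_R^{-1}(B)\in\mathcal A$ for every $B\in\mathcal A$ with $B\subseteq R$. Axiom II: $G$ is reflexive, symmetric, and $G\circ G=G$. Axiom III: (a) $\mu(R)+\mu(I)=E_0>0$; (b) $\mu(\Pi_R^{-1}(B))=\mu(B)$ for all $B\in\mathcal A$, $B\subseteq R$; (c) coupling law: for all $B\in\mathcal A$, $\mu^{\otimes2}((B\times X)\cap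 G)=\mu(B)+\eta\,\mu^{\otimes2}((\Pi_R^{-1}(B)\times X)\cap G)$. An admissible structural model is a pre-structural datum satisfying Axioms I, II, III. *)

theory Defs
  imports "HOL-Analysis.Analysis"
begin

definition prod_alg :: "'a set \<Rightarrow> 'a set set \<Rightarrow> ('a \<times> 'a) set set" where
  "prod_alg X A = \<Inter>{M. algebra (X \<times> X) M \<and>
                        {B1 \<times> B2 | B1 B2. B1 \<in> A \<and> B2 \<in> A} \<subseteq> M}"

definition fin_add_measure :: "'b set set \<Rightarrow> ('b set \<Rightarrow> real) \<Rightarrow> bool" where
  "fin_add_measure A mu \<longleftrightarrow> mu {} = 0 \<and> (\<forall>B\<in>A. 0 \<le> mu B) \<and>
     (\<forall>B\<in>A. \<forall>C\<in>A. B \<inter> C = {} \<longrightarrow> mu (B \<union> C) = mu B + mu C)"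

definition sigma_additive :: "'b set set \<Rightarrow> ('b set \<Rightarrow> real) \<Rightarrow> bool" where
  "sigma_additive A mu \<longleftrightarrow> (\<forall>F :: nat \<Rightarrow> 'b set. range F \<subseteq> A \<longrightarrow> disjoint_family F \<longrightarrow>
      (\<Union>n. F n) \<in> A \<longrightarrow> (\<lambda>n. mu (F n)) sums mu (\<Union>n. F n))"

definition preim :: "'a set \<Rightarrow> ('a \<Rightarrow> 'a) \<Rightarrow> 'a set \<Rightarrow> 'a set" where
  "preim X PiR B = {x \<in> X. PiR x \<in> B}"

definition pre_structural ::
  "'a set \<Rightarrow> 'a set set \<Rightarrow> ('a set \<Rightarrow> real) \<Rightarrow> (('a \<times> 'a) set \<Rightarrow> real) \<Rightarrow>
   'a set \<Rightarrow> 'a set \<Rightarrow> ('a \<Rightarrow> 'a) \<Rightarrow> ('a \<times> 'a) set \<Rightarrow> real \<Rightarrow> real \<Rightarrow> bool" where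
  "pre_structural X A mu mu2 R I PiR G E0 eta \<longleftrightarrow>
     X \<noteq> {} \<and> algebra X A \<and> fin_add_measure A mu \<and>
     fin_add_measure (prod_alg X A) mu2 \<and>
     (\<forall>B1\<in>A. \<forall>B2\<in>A. mu2 (B1 \<times> B2) = mu B1 * mu B2) \<and>
     R \<in> A \<and> I \<in> A \<and> R \<inter> I = {} \<and>
     (\<forall>x\<in>X. PiR x \<in> R) \<and> G \<in> prod_alg X A \<and> 0 < E0 \<and> 0 \<le> eta \<and> eta \<le> 1"

definition axiom_I :: "'a set \<Rightarrow> 'a set set \<Rightarrow> 'a set \<Rightarrow> ('a \<Rightarrow> 'a) \<Rightarrow> bool" where
  "axiom_I X A R PiR \<longleftrightarrow> (\<forall>x\<in>X. PiR (PiR x) = PiR x) \<and> (\<forall>r\<in>R. PiR r = r) \<and>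
     (\<forall>B\<in>A. B \<subseteq> R \<longrightarrow> preim X PiR B \<in> A)"

definition axiom_II :: "'a set \<Rightarrow> ('a \<times> 'a) set \<Rightarrow> bool" where
  "axiom_II X G \<longleftrightarrow> (\<forall>x\<in>X. (x, x) \<in> G) \<and> sym G \<and> G O G = G"

definition axiom_IIIa :: "('a set \<Rightarrow> real) \<Rightarrow> 'a set \<Rightarrow> 'a set \<Rightarrow> real \<Rightarrow> bool" where
  "axiom_IIIa mu R I E0 \<longleftrightarrow> mu R + mu I = E0 \<and> 0 < E0"

definition axiom_IIIb ::
  "'a set \<Rightarrow> 'a set set \<Rightarrow> ('a set \<Rightarrow> real) \<Rightarrow> 'a set \<Rightarrow> ('a \<Rightarrow> 'a) \<Rightarrow> bool" where
  "axiom_IIIb X A mu R PiR \<longleftrightarrow> (\<forall>B\<in>A. B \<subseteq> R \<longrightarrow> mu (preim X PiR B) = mu B)"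

definition axiom_IIIc ::
  "'a set \<Rightarrow> 'a set set \<Rightarrow> ('a set \<Rightarrow> real) \<Rightarrow> (('a \<times> 'a) set \<Rightarrow> real) \<Rightarrow>
   ('a \<Rightarrow> 'a) \<Rightarrow> ('a \<times> 'a) set \<Rightarrow> real \<Rightarrow> bool" where
  "axiom_IIIc X A mu mu2 PiR G eta \<longleftrightarrow>
     (\<forall>B\<in>A. mu2 ((B \<times> X) \<inter> G) = mu B + eta * mu2 ((preim X PiR B \<times> X) \<inter> G))"

definition admissible ::
  "'a set \<Rightarrow> 'a set set \<Rightarrow> ('a set \<Rightarrow> real) \<Rightarrow> (('a \<times> 'a) set \<Rightarrow> real) \<Rightarrow>
   'a set \<Rightarrow> 'a set \<Rightarrow> ('a \<Rightarrow> 'a) \<Rightarrow> ('a \<times> 'a) set \<Rightarrow> real \<Rightarrow> real \<Rightarrow> bool" where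
  "admissible X A mu mu2 R I PiR G E0 eta \<longleftrightarrow>
     pre_structural X A mu mu2 R I PiR G E0 eta \<and> axiom_I X A R PiR \<and> axiom_II X G \<and>
     axiom_IIIa mu R I E0 \<and> axiom_IIIb X A mu R PiR \<and> axiom_IIIc X A mu mu2 PiR G eta"

end

theory Submission
  imports Defs
begin

text \<open>
  Axiom III(b) for \<open>B = R\<close> gives \<open>\<mu>(X) = \<mu>(R)\<close>, because \<open>\<Pi>\<^sub>R\<^sup>-\<^sup>1(R) = X\<close>; so \<open>X - R\<close> is
  \<open>\<mu>\<close>-null, and by the product rule \<open>(X - R) \<times> X \<union> X \<times> (X - R)\<close> is \<open>\<mu>\<^sup>\<otimes>\<^sup>2\<close>-null.  Hence
  every set of \<open>\<A>\<close> (of \<open>\<A> \<otimes> \<A>\<close>) may be replaced by its trace on \<open>R\<close> (on \<open>R \<times> R\<close>)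
  without changing its measure.  As \<open>\<Pi>\<^sub>R\<close> fixes \<open>R\<close>, the sets \<open>\<Pi>\<^sub>R\<^sup>-\<^sup>1(B)\<close> and \<open>B\<close> have the
  same trace on \<open>R\<close>, so both sides of the coupling law for \<open>\<D>\<close> depend only on \<open>B \<inter> R\<close>
  and are those of the coupling law for \<open>\<D>|\<^sub>R\<close>.  The other axioms pass to \<open>\<D>|\<^sub>R\<close>
  directly, and \<open>\<mu>(R) = E\<^sub>0 > 0\<close> because \<open>\<mu>(I) \<le> \<mu>(X - R) = 0\<close>.
\<close>

lemma fin_add_measure_nonneg: "fin_add_measure M mu \<Longrightarrow> S \<in> M \<Longrightarrow> 0 \<le> mu S"
  by (simp add: fin_add_measure_def)

lemma fin_add_measure_Diff:
  assumes "algebra \<Omega> M" "fin_add_measure M mu" "S \<in> M" "T \<in> M" "T \<subseteq> S"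
  shows "mu S = mu T + mu (S - T)"
proof -
  interpret algebra \<Omega> M by fact
  have "S = T \<union> (S - T)" using \<open>T \<subseteq> S\<close> by blast
  then show ?thesis
    using assms(2-4) unfolding fin_add_measure_def by (metis Diff Diff_disjoint)
qed

lemma fin_add_measure_mono:
  assumes "algebra \<Omega> M" "fin_add_measure M mu" "S \<in> M" "T \<in> M" "T \<subseteq> S"
  shows "mu T \<le> mu S"
proof -
  interpret algebra \<Omega> M by fact
  show ?thesis
    using fin_add_measure_Diff[OF assms] fin_add_measure_nonneg[OF assms(2)] assms(3,4)
    by (simp add: Diff)
qed

lemma fin_add_measure_Diff_null:
  assumes "algebra \<Omega> M" "fin_add_measure M mu" "S \<in> M" "N \<in> M" "mu N = 0"
  shows "mu (S - N) = mu S"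
proof -
  interpret algebra \<Omega> M by fact
  have "mu (S \<inter> N) \<le> mu N"
    using fin_add_measure_mono assms by blast
  moreover have "0 \<le> mu (S \<inter> N)"
    using fin_add_measure_nonneg assms by blast
  moreover have "mu S = mu (S \<inter> N) + mu (S - S \<inter> N)"
    using fin_add_measure_Diff assms by blast
  ultimately show ?thesis using \<open>mu N = 0\<close> by (simp add: Diff_Int)
qed

lemma fin_add_measure_Un_null:
  assumes "algebra \<Omega> M" "fin_add_measure M mu" "N1 \<in> M" "N2 \<in> M" "mu N1 = 0" "mu N2 = 0"
  shows "mu (N1 \<union> N2) = 0"
proof -
  interpret algebra \<Omega> M by fact
  have "mu (N1 \<union> N2) = mu N1 + mu (N2 - N1)"
    using fin_add_measure_Diff[of \<Omega> M mu "N1 \<union> N2" N1] assms by (simp add: Un Un_Diff)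
  then show ?thesis
    using fin_add_measure_Diff_null[OF assms(1,2,4,3,5)] \<open>mu N1 = 0\<close> \<open>mu N2 = 0\<close> by simp
qed

lemma algebra_restrict:
  assumes "algebra X A" "R \<in> A"
  shows "algebra R {B \<in> A. B \<subseteq> R}"
proof -
  interpret algebra X A by fact
  have "(\<inter>) R ` A = {B \<in> A. B \<subseteq> R}"
    using \<open>R \<in> A\<close> by blast
  then show ?thesis
    using restricted_algebra[OF \<open>R \<in> A\<close>] by simp
qed

lemma algebra_Inter:
  assumes "F \<noteq> {}" "\<And>M. M \<in> F \<Longrightarrow> algebra \<Omega> M"
  shows "algebra \<Omega> (\<Inter>F)"
proof -
  have closed: "M \<subseteq> Pow \<Omega> \<and> {} \<in> M \<and> (\<forall>a\<in>M. \<Omega> - a \<in> M) \<and> (\<forall>a\<in>M. \<forall>b\<in>M. a \<union> b \<in> M)"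
    if "M \<in> F" for M
    using assms(2)[OF that] unfolding algebra_iff_Un .
  show ?thesis
    unfolding algebra_iff_Un
  proof (intro conjI ballI)
    show "\<Inter>F \<subseteq> Pow \<Omega>" "{} \<in> \<Inter>F"
      using closed \<open>F \<noteq> {}\<close> by blast+
    show "\<Omega> - a \<in> \<Inter>F" if "a \<in> \<Inter>F" for a
      using closed that by blast
    show "a \<union> b \<in> \<Inter>F" if "a \<in> \<Inter>F" "b \<in> \<Inter>F" for a b
      using closed that by blast
  qed
qed

lemma algebra_Int_preimage:
  assumes "algebra T M" "T \<subseteq> \<Omega>"
  shows "algebra \<Omega> {S. S \<subseteq> \<Omega> \<and> S \<inter> T \<in> M}"
proof -
  interpret algebra T M by fact
  have "(\<Omega> - S) \<inter> T = T - S \<inter> T" for S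
    using \<open>T \<subseteq> \<Omega>\<close> by blast
  then show ?thesis
    unfolding algebra_iff_Un by (auto simp: Int_Un_distrib2)
qed

lemma prod_alg_algebra: "algebra X A \<Longrightarrow> algebra (X \<times> X) (prod_alg X A)"
  unfolding prod_alg_def
  by (rule algebra_Inter) (auto intro!: exI[of _ "Pow (X \<times> X)"] algebra_Pow
      simp: algebra_iff_Un)

lemma prod_alg_rect: "B1 \<in> A \<Longrightarrow> B2 \<in> A \<Longrightarrow> B1 \<times> B2 \<in> prod_alg X A"
  unfolding prod_alg_def by blast

lemma prod_alg_minimal:
  "algebra (X \<times> X) M \<Longrightarrow> (\<And>B1 B2. B1 \<in> A \<Longrightarrow> B2 \<in> A \<Longrightarrow> B1 \<times> B2 \<in> M) \<Longrightarrow>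
     prod_alg X A \<subseteq> M"
  unfolding prod_alg_def by blast

lemma prod_alg_restrict_subset:
  assumes "algebra X A" "R \<in> A"
  shows "prod_alg R {B \<in> A. B \<subseteq> R} \<subseteq> prod_alg X A"
proof -
  have "algebra (R \<times> R) {S \<in> prod_alg X A. S \<subseteq> R \<times> R}"
    using algebra_restrict prod_alg_algebra prod_alg_rect assms by blast
  then have "prod_alg R {B \<in> A. B \<subseteq> R} \<subseteq> {S \<in> prod_alg X A. S \<subseteq> R \<times> R}"
    by (rule prod_alg_minimal) (auto intro: prod_alg_rect)
  then show ?thesis by blast
qed

lemma prod_alg_Int_square:
  assumes "algebra X A" "R \<in> A" "S \<in> prod_alg X A"
  shows "S \<inter> (R \<times> R) \<in> prod_alg R {B \<in> A. B \<subseteq> R}"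
proof -
  interpret algebra X A by fact
  let ?AR = "{B \<in> A. B \<subseteq> R}"
  have "algebra (R \<times> R) (prod_alg R ?AR)"
    using prod_alg_algebra algebra_restrict[OF assms(1,2)] by blast
  moreover have "R \<times> R \<subseteq> X \<times> X"
    using sets_into_space[OF \<open>R \<in> A\<close>] by blast
  ultimately have "algebra (X \<times> X) {S. S \<subseteq> X \<times> X \<and> S \<inter> (R \<times> R) \<in> prod_alg R ?AR}"
    by (rule algebra_Int_preimage)
  then have "prod_alg X A \<subseteq> {S. S \<subseteq> X \<times> X \<and> S \<inter> (R \<times> R) \<in> prod_alg R ?AR}"
  proof (rule prod_alg_minimal)
    fix B1 B2 assume "B1 \<in> A" "B2 \<in> A"
    then have "(B1 \<inter> R) \<times> (B2 \<inter> R) \<in> prod_alg R ?AR"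
      using \<open>R \<in> A\<close> by (intro prod_alg_rect) auto
    moreover have "(B1 \<times> B2) \<inter> (R \<times> R) = (B1 \<inter> R) \<times> (B2 \<inter> R)" by blast
    ultimately show "B1 \<times> B2 \<in> {S. S \<subseteq> X \<times> X \<and> S \<inter> (R \<times> R) \<in> prod_alg R ?AR}"
      using \<open>B1 \<in> A\<close> \<open>B2 \<in> A\<close> sets_into_space by auto
  qed
  then show ?thesis using \<open>S \<in> prod_alg X A\<close> by blast
qed

lemma axiom_II_restrict:
  assumes "axiom_II X G" "R \<subseteq> X"
  shows "axiom_II R (G \<inter> (R \<times> R))"
proof -
  have refl: "(x, x) \<in> G \<inter> (R \<times> R)" if "x \<in> R" for x
    using assms that unfolding axiom_II_def by blast
  have "G \<inter> (R \<times> R) \<subseteq> (G \<inter> (R \<times> R)) O (G \<inter> (R \<times> R))"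
    using refl by blast
  then show ?thesis
    using assms refl unfolding axiom_II_def sym_def by blast
qed

lemma preim_id: "B \<subseteq> R \<Longrightarrow> preim R (\<lambda>x. x) B = B"
  by (auto simp: preim_def)

lemma axiom_I_id: "axiom_I R M R (\<lambda>x. x)"
  by (simp add: axiom_I_def preim_id)

lemma axiom_IIIb_id: "axiom_IIIb R M mu R (\<lambda>x. x)"
  by (simp add: axiom_IIIb_def preim_id)

lemma axiom_IIIc_id:
  "M \<subseteq> Pow R \<Longrightarrow> axiom_IIIc R M mu mu2 (\<lambda>x. x) H eta \<longleftrightarrow>
     (\<forall>B\<in>M. mu2 ((B \<times> R) \<inter> H) = mu B + eta * mu2 ((B \<times> R) \<inter> H))"
  unfolding axiom_IIIc_def by (intro ball_cong refl) (auto simp: preim_id)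

locale pre_structural_datum =
  fixes X :: "'a set" and A :: "'a set set" and mu :: "'a set \<Rightarrow> real"
    and mu2 :: "('a \<times> 'a) set \<Rightarrow> real" and R I :: "'a set" and PiR :: "'a \<Rightarrow> 'a"
    and G :: "('a \<times> 'a) set" and E0 eta :: real
  assumes pre_structural: "pre_structural X A mu mu2 R I PiR G E0 eta"
begin

lemma
  shows algebra_sets: "algebra X A"
    and fin_add_mu: "fin_add_measure A mu"
    and fin_add_mu2: "fin_add_measure (prod_alg X A) mu2"
    and mu2_rect: "B1 \<in> A \<Longrightarrow> B2 \<in> A \<Longrightarrow> mu2 (B1 \<times> B2) = mu B1 * mu B2"
    and core_in_sets: "R \<in> A"
    and I_in_sets: "I \<in> A"
    and core_disjoint: "R \<inter> I = {}"
    and PiR_into_core: "x \<in> X \<Longrightarrow> PiR x \<in> R"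
    and G_in_pairs: "G \<in> prod_alg X A"
    and eta_nonneg: "0 \<le> eta"
    and eta_le_1: "eta \<le> 1"
  using pre_structural unfolding pre_structural_def by auto

sublocale sets: algebra X A
  by (rule algebra_sets)

sublocale pairs: algebra "X \<times> X" "prod_alg X A"
  by (rule prod_alg_algebra[OF algebra_sets])

lemma core_subset: "R \<subseteq> X"
  using core_in_sets by (rule sets.sets_into_space)

lemma core_complement_in_sets: "X - R \<in> A"
  using core_in_sets by blast

lemma core_complement_null:
  assumes "axiom_IIIb X A mu R PiR"
  shows "mu (X - R) = 0"
proof -
  have "preim X PiR R = X"
    using PiR_into_core by (auto simp: preim_def)
  then have "mu X = mu R"
    using assms core_in_sets unfolding axiom_IIIb_def by force
  then show ?thesis
    using fin_add_measure_Diff[OF algebra_sets fin_add_mu sets.top core_in_sets core_subset]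
    by simp
qed

lemma preim_Int_core: "axiom_I X A R PiR \<Longrightarrow> preim X PiR B \<inter> R = B \<inter> R"
  using core_subset unfolding axiom_I_def preim_def by auto

lemma preim_in_sets:
  assumes "axiom_I X A R PiR" "B \<in> A"
  shows "preim X PiR B \<in> A"
proof -
  have "preim X PiR B = preim X PiR (B \<inter> R)"
    using PiR_into_core by (auto simp: preim_def)
  then show ?thesis
    using assms core_in_sets unfolding axiom_I_def by auto
qed

context
  assumes null: "mu (X - R) = 0"
begin

lemma measure_Int_core:
  assumes "B \<in> A"
  shows "mu (B \<inter> R) = mu B"
proof -
  have "B \<inter> R = B - (X - R)"
    using sets.sets_into_space[OF assms] by blast
  then show ?thesis
    using fin_add_measure_Diff_null[OF algebra_sets fin_add_mu assms core_complement_in_sets null]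
    by simp
qed

lemma pair_measure_Int_core:
  assumes "S \<in> prod_alg X A"
  shows "mu2 (S \<inter> (R \<times> R)) = mu2 S"
proof -
  let ?N = "(X - R) \<times> X \<union> X \<times> (X - R)"
  have "(X - R) \<times> X \<in> prod_alg X A" "X \<times> (X - R) \<in> prod_alg X A"
    by (simp_all add: prod_alg_rect core_complement_in_sets)
  moreover have "mu2 ((X - R) \<times> X) = 0" "mu2 (X \<times> (X - R)) = 0"
    by (simp_all add: mu2_rect core_complement_in_sets null)
  ultimately have "?N \<in> prod_alg X A" "mu2 ?N = 0"
    using fin_add_measure_Un_null[OF pairs.algebra_axioms fin_add_mu2] by auto
  moreover have "S \<inter> (R \<times> R) = S - ?N"
    using pairs.sets_into_space[OF assms] core_subset by blast
  ultimately show ?thesis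
    using fin_add_measure_Diff_null[OF pairs.algebra_axioms fin_add_mu2 assms] by simp
qed

lemma coupling_mass_restrict:
  assumes "B \<in> A"
  shows "mu2 ((B \<times> X) \<inter> G) = mu2 (((B \<inter> R) \<times> R) \<inter> (G \<inter> (R \<times> R)))"
proof -
  have "(B \<times> X) \<inter> G \<in> prod_alg X A"
    using assms G_in_pairs by (simp add: prod_alg_rect pairs.Int)
  moreover have "(B \<times> X) \<inter> G \<inter> (R \<times> R) = ((B \<inter> R) \<times> R) \<inter> (G \<inter> (R \<times> R))"
    using core_subset by blast
  ultimately show ?thesis
    using pair_measure_Int_core by metis
qed

lemma coupling_law_iff_restricted:
  assumes "axiom_I X A R PiR"
  shows "axiom_IIIc X A mu mu2 PiR G eta \<longleftrightarrow>
    axiom_IIIc R {B \<in> A. B \<subseteq> R} mu mu2 (\<lambda>x. x) (G \<inter> (R \<times> R)) eta"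
proof -
  define coupled where "coupled C \<longleftrightarrow>
    mu2 ((C \<times> R) \<inter> (G \<inter> (R \<times> R))) = mu C + eta * mu2 ((C \<times> R) \<inter> (G \<inter> (R \<times> R)))" for C
  have "axiom_IIIc X A mu mu2 PiR G eta \<longleftrightarrow> (\<forall>B\<in>A. coupled (B \<inter> R))"
    unfolding axiom_IIIc_def coupled_def
    using coupling_mass_restrict measure_Int_core preim_in_sets[OF assms]
      preim_Int_core[OF assms] by (intro ball_cong) simp_all
  also have "\<dots> \<longleftrightarrow> (\<forall>C\<in>{B \<in> A. B \<subseteq> R}. coupled C)"
    using core_in_sets by (auto simp: Int_absorb2)
  also have "\<dots> \<longleftrightarrow> axiom_IIIc R {B \<in> A. B \<subseteq> R} mu mu2 (\<lambda>x. x) (G \<inter> (R \<times> R)) eta"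
    by (subst axiom_IIIc_id) (auto simp: coupled_def)
  finally show ?thesis .
qed

end

lemma pre_structural_restrict:
  assumes "0 < mu R"
  shows "pre_structural R {B \<in> A. B \<subseteq> R} mu mu2 R {} (\<lambda>x. x) (G \<inter> (R \<times> R)) (mu R) eta"
proof -
  have "algebra R {B \<in> A. B \<subseteq> R}"
    using algebra_restrict[OF algebra_sets core_in_sets] .
  moreover have "fin_add_measure (prod_alg R {B \<in> A. B \<subseteq> R}) mu2"
    using fin_add_mu2 prod_alg_restrict_subset[OF algebra_sets core_in_sets]
    unfolding fin_add_measure_def by blast
  moreover have "G \<inter> (R \<times> R) \<in> prod_alg R {B \<in> A. B \<subseteq> R}"
    using prod_alg_Int_square[OF algebra_sets core_in_sets G_in_pairs] .
  moreover have "R \<noteq> {}"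
    using assms fin_add_mu unfolding fin_add_measure_def by auto
  ultimately show ?thesis
    unfolding pre_structural_def
    using assms fin_add_mu mu2_rect core_in_sets eta_nonneg eta_le_1 sets.empty_sets
    unfolding fin_add_measure_def by auto
qed

lemma admissible_iff_restricted:
  assumes aI: "axiom_I X A R PiR" and aII: "axiom_II X G"
    and aIIIa: "axiom_IIIa mu R I E0" and aIIIb: "axiom_IIIb X A mu R PiR"
  shows "admissible X A mu mu2 R I PiR G E0 eta \<longleftrightarrow>
    admissible R {B \<in> A. B \<subseteq> R} mu mu2 R {} (\<lambda>x. x) (G \<inter> (R \<times> R)) (mu R) eta"
proof -
  have null: "mu (X - R) = 0"
    using core_complement_null[OF aIIIb] .
  have "I \<subseteq> X - R"
    using sets.sets_into_space[OF I_in_sets] core_disjoint by blast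
  then have "mu I \<le> 0"
    using fin_add_measure_mono[OF algebra_sets fin_add_mu core_complement_in_sets I_in_sets] null
    by simp
  then have mu_R_pos: "0 < mu R"
    using aIIIa fin_add_measure_nonneg[OF fin_add_mu I_in_sets] unfolding axiom_IIIa_def by linarith
  then have "axiom_IIIa mu R {} (mu R)"
    using fin_add_mu unfolding axiom_IIIa_def fin_add_measure_def by simp
  then show ?thesis
    unfolding admissible_def
    using pre_structural_restrict[OF mu_R_pos] pre_structural assms axiom_I_id axiom_IIIb_id
      axiom_II_restrict[OF aII core_subset] coupling_law_iff_restricted[OF null aI] by blast
qed

end

theorem theorem8p18:
  fixes X :: "'a set" and A :: "'a set set" and mu :: "'a set \<Rightarrow> real"
    and mu2 :: "('a \<times> 'a) set \<Rightarrow> real" and R I :: "'a set" and PiR :: "'a \<Rightarrow> 'a"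
    and G :: "('a \<times> 'a) set" and E0 eta :: real
  assumes pre: "pre_structural X A mu mu2 R I PiR G E0 eta"
    and eta_lt: "eta < 1"
    and sing: "\<forall>r\<in>R. {r} \<in> A"
    and fibre: "\<forall>r\<in>R. preim X PiR {r} \<in> A"
    and Rcases: "finite R \<or> (countable R \<and> sigma_algebra X A \<and> sigma_additive A mu)"
  shows
    "(axiom_I X A R PiR \<and> axiom_IIIb X A mu R PiR \<longrightarrow>
        mu (X - R) = 0 \<and>
        (\<forall>B\<in>A. mu2 ((B \<times> X) \<inter> G) = mu2 (((B \<inter> R) \<times> R) \<inter> (G \<inter> (R \<times> R)))))
   \<and> (axiom_I X A R PiR \<and> axiom_IIIb X A mu R PiR \<longrightarrow>
        (axiom_IIIc X A mu mu2 PiR G eta \<longleftrightarrow>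
           axiom_IIIc R {B \<in> A. B \<subseteq> R} mu mu2 (\<lambda>x. x) (G \<inter> (R \<times> R)) eta) \<and>
        (axiom_IIIc R {B \<in> A. B \<subseteq> R} mu mu2 (\<lambda>x. x) (G \<inter> (R \<times> R)) eta \<longleftrightarrow>
           (\<forall>B\<in>A. B \<subseteq> R \<longrightarrow>
              mu2 ((B \<times> R) \<inter> (G \<inter> (R \<times> R))) =
                mu B + eta * mu2 ((B \<times> R) \<inter> (G \<inter> (R \<times> R))))))
   \<and> (axiom_I X A R PiR \<and> axiom_II X G \<and> axiom_IIIa mu R I E0 \<and> axiom_IIIb X A mu R PiR
        \<and> X = R \<union> I \<longrightarrow>
        (admissible X A mu mu2 R I PiR G E0 eta \<longleftrightarrow>
           admissible R {B \<in> A. B \<subseteq> R} mu mu2 R {} (\<lambda>x. x) (G \<inter> (R \<times> R)) (mu R) eta))"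
proof -
  interpret pre_structural_datum X A mu mu2 R I PiR G E0 eta
    by (rule pre_structural_datum.intro[OF pre])
  have restricted_coupling_law:
    "axiom_IIIc R {B \<in> A. B \<subseteq> R} mu mu2 (\<lambda>x. x) (G \<inter> (R \<times> R)) eta \<longleftrightarrow>
       (\<forall>B\<in>A. B \<subseteq> R \<longrightarrow>
          mu2 ((B \<times> R) \<inter> (G \<inter> (R \<times> R))) = mu B + eta * mu2 ((B \<times> R) \<inter> (G \<inter> (R \<times> R))))"
    by (subst axiom_IIIc_id) auto
  show ?thesis
    using core_complement_null coupling_mass_restrict coupling_law_iff_restricted
      restricted_coupling_law admissible_iff_restricted by blast
qed

end
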